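(* Let $H=(V,E)$ be a hypergraph such that the digraph $\mathcal D_3(H)$ has a non-trivial spanning arborescence. Then $H$ is eulerian.
   Context: A hypergraph $H=(V,E)$ consists of a finite nonempty vertex set $V$, a finite edge set $E$ disjoint from $V$, and an incidence function assigning to each edge $e\in E$ a subset of $V$ (also denoted $e$); distinct edges may have the same vertex set. Hypergraphs are assumed to have no empty edges. A walk is a sequence $W=v_0e_1v_1e_2\cdots e_kv_k$ with $v_i\in V$, $e_i\in E$, such that for each $i$, $v_{i-1}\ne v_i$ and $v_{i-1},v_i\in e_i$. $W$ is closed if $k\ge 2$ and $v_0=v_k$; it is a strict trail if $e_1,\dots,e_k$ are pairwise distinct. An Euler tour of $H$ is a closed strict trail traversing every edge of $H$; $H$ is eulerian if it has one. $\mathcal D_3(H)$ is the digraph with vertex set $E$ and arc set $\{(e,f): e,f\in E,\ |f\setminus e|=1,\ |e\cap f|\ge 3\}$. An arborescence is a digraph whose underlying undirected graph is a tree and whose arcs are all directed towards a root; it is non-trivial if it has at least two vertices. *)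

theory Defs
  imports Main
begin

text \<open>A hypergraph is given by a vertex set V (of type 'v), an edge set E (of a
separate type 'e, so V and E are disjoint) and an incidence function inc
assigning to each edge its vertex set. Distinct edges may share a vertex set.\<close>

definition hypergraph :: "'v set \<Rightarrow> 'e set \<Rightarrow> ('e \<Rightarrow> 'v set) \<Rightarrow> bool" where
  "hypergraph V E inc \<longleftrightarrow> finite V \<and> V \<noteq> {} \<and> finite E \<and>
     (\<forall>e\<in>E. inc e \<subseteq> V \<and> inc e \<noteq> {})"

text \<open>A walk v0 e1 v1 ... ek vk is represented by the vertex list vs = [v0,...,vk]
and the edge list es = [e1,...,ek].\<close>

definition walk :: "'v set \<Rightarrow> 'e set \<Rightarrow> ('e \<Rightarrow> 'v set) \<Rightarrow> 'v list \<Rightarrow> 'e list \<Rightarrow> bool" where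
  "walk V E inc vs es \<longleftrightarrow> length vs = length es + 1 \<and> set vs \<subseteq> V \<and> set es \<subseteq> E \<and>
     (\<forall>i < length es. vs ! i \<noteq> vs ! (i+1) \<and> vs ! i \<in> inc (es ! i) \<and> vs ! (i+1) \<in> inc (es ! i))"

definition closed_walk :: "'v set \<Rightarrow> 'e set \<Rightarrow> ('e \<Rightarrow> 'v set) \<Rightarrow> 'v list \<Rightarrow> 'e list \<Rightarrow> bool" where
  "closed_walk V E inc vs es \<longleftrightarrow> walk V E inc vs es \<and> length es \<ge> 2 \<and> hd vs = last vs"

definition strict_trail :: "'v set \<Rightarrow> 'e set \<Rightarrow> ('e \<Rightarrow> 'v set) \<Rightarrow> 'v list \<Rightarrow> 'e list \<Rightarrow> bool" where
  "strict_trail V E inc vs es \<longleftrightarrow> walk V E inc vs es \<and> distinct es"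

definition euler_tour :: "'v set \<Rightarrow> 'e set \<Rightarrow> ('e \<Rightarrow> 'v set) \<Rightarrow> 'v list \<Rightarrow> 'e list \<Rightarrow> bool" where
  "euler_tour V E inc vs es \<longleftrightarrow> closed_walk V E inc vs es \<and> strict_trail V E inc vs es \<and> set es = E"

definition eulerian :: "'v set \<Rightarrow> 'e set \<Rightarrow> ('e \<Rightarrow> 'v set) \<Rightarrow> bool" where
  "eulerian V E inc \<longleftrightarrow> (\<exists>vs es. euler_tour V E inc vs es)"

definition D3_arcs :: "'e set \<Rightarrow> ('e \<Rightarrow> 'v set) \<Rightarrow> ('e \<times> 'e) set" where
  "D3_arcs E inc = {(e, f). e \<in> E \<and> f \<in> E \<and> card (inc f - inc e) = 1 \<and> card (inc e \<inter> inc f) \<ge> 3}"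

text \<open>The underlying undirected (multi)graph of the finite digraph (N, A) is a tree:
it is loopless, connected, and has exactly |N| - 1 edges.\<close>

definition underlying_tree :: "'a set \<Rightarrow> ('a \<times> 'a) set \<Rightarrow> bool" where
  "underlying_tree N A \<longleftrightarrow> finite N \<and> N \<noteq> {} \<and> A \<subseteq> N \<times> N \<and> (\<forall>x. (x, x) \<notin> A) \<and>
     card A + 1 = card N \<and> (\<forall>x\<in>N. \<forall>y\<in>N. (x, y) \<in> (A \<union> A\<inverse>)\<^sup>*)"

text \<open>(N, A) is an arborescence with root r: its underlying graph is a tree and all
arcs are directed towards r (equivalently, every vertex has a directed path to r).\<close>

definition arborescence :: "'a set \<Rightarrow> ('a \<times> 'a) set \<Rightarrow> 'a \<Rightarrow> bool" where
  "arborescence N A r \<longleftrightarrow> underlying_tree N A \<and> r \<in> N \<and> (\<forall>x\<in>N. (x, r) \<in> A\<^sup>*)"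

definition has_nontrivial_spanning_arborescence :: "'a set \<Rightarrow> ('a \<times> 'a) set \<Rightarrow> bool" where
  "has_nontrivial_spanning_arborescence N D \<longleftrightarrow>
     card N \<ge> 2 \<and> (\<exists>A r. A \<subseteq> D \<and> arborescence N A r)"

end

theory Submission
  imports Defs
begin

text \<open>Start from two edges joined by an arc of D_3(H): they share two vertices a, b, so
a b a is an Euler tour of the pair. Then add the remaining edges one at a time, always an
edge e with an arc (e, f) into the part T already covered; such an arc exists because every
edge reaches the root. The tour passes f between two vertices u, w of f. Since f has only
one vertex outside e, one of u, w lies in e, and since e and f share a third vertex x, the
step u f w can be replaced by u e x f w or u f x e w.\<close>

fun walk_steps :: "('e \<Rightarrow> 'v set) \<Rightarrow> 'v list \<Rightarrow> 'e list \<Rightarrow> bool" where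
  "walk_steps inc [v] [] = True"
| "walk_steps inc (v # w # vs) (e # es) =
     (v \<noteq> w \<and> v \<in> inc e \<and> w \<in> inc e \<and> walk_steps inc (w # vs) es)"
| "walk_steps inc _ _ = False"

lemma walk_steps_length: "walk_steps inc vs es \<Longrightarrow> length vs = Suc (length es)"
  by (induction inc vs es rule: walk_steps.induct) auto

lemma walk_steps_iff_nth:
  assumes "length vs = Suc (length es)"
  shows "walk_steps inc vs es \<longleftrightarrow>
    (\<forall>i<length es. vs ! i \<noteq> vs ! (i+1) \<and> vs ! i \<in> inc (es ! i) \<and> vs ! (i+1) \<in> inc (es ! i))"
  using assms
proof (induction es arbitrary: vs)
  case Nil
  then obtain v where "vs = [v]" by (auto simp: length_Suc_conv)
  then show ?case by simp
next
  case (Cons e es)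
  then obtain v w vs' where vs: "vs = v # w # vs'"
    by (cases vs; cases "tl vs") auto
  show ?case using Cons.IH[of "w # vs'"] Cons.prems unfolding vs
    by (simp add: All_less_Suc2)
qed

lemma walk_iff_walk_steps:
  "walk V E inc vs es \<longleftrightarrow> set vs \<subseteq> V \<and> set es \<subseteq> E \<and> walk_steps inc vs es"
  unfolding walk_def using walk_steps_iff_nth[of vs es inc] walk_steps_length[of inc vs es]
  by auto

lemma walk_steps_append_Cons:
  assumes "length vs1 = length es1"
  shows "walk_steps inc (vs1 @ u # w # vs2) (es1 @ f # es2) \<longleftrightarrow>
    walk_steps inc (vs1 @ [u]) es1 \<and> u \<noteq> w \<and> u \<in> inc f \<and> w \<in> inc f \<and>
    walk_steps inc (w # vs2) es2"
  using assms
proof (induction es1 arbitrary: vs1)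
  case Nil
  then show ?case by simp
next
  case (Cons e es1)
  then obtain a vs1' where vs1: "vs1 = a # vs1'" by (cases vs1) auto
  show ?case
  proof (cases vs1')
    case Nil
    then show ?thesis using Cons vs1 by simp
  next
    case (Cons b vs1'')
    then show ?thesis using Cons.IH[of vs1'] Cons.prems vs1 by simp
  qed
qed

lemma walk_steps_split_at_edge:
  assumes "walk_steps inc vs es" and "f \<in> set es"
  obtains vs1 u w vs2 es1 es2 where "vs = vs1 @ u # w # vs2" "es = es1 @ f # es2"
    "length vs1 = length es1"
proof -
  obtain es1 es2 where es: "es = es1 @ f # es2"
    using assms(2) by (metis split_list)
  then have "length (drop (length es1) vs) = Suc (Suc (length es2))"
    using walk_steps_length[OF assms(1)] by simp
  then obtain u w vs2 where "drop (length es1) vs = u # w # vs2"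
    unfolding length_Suc_conv by blast
  then have "vs = take (length es1) vs @ u # w # vs2"
    by (metis append_take_drop_id)
  moreover have "length (take (length es1) vs) = length es1"
    using walk_steps_length[OF assms(1)] es by simp
  ultimately show thesis using that es by blast
qed

lemma walk_steps_detour:
  assumes len: "length vs1 = length es1"
    and steps: "walk_steps inc (vs1 @ u # w # vs2) (es1 @ f # es2)"
    and "x \<in> inc e" "x \<in> inc f" "x \<noteq> u" "x \<noteq> w"
  shows "u \<in> inc e \<Longrightarrow> walk_steps inc (vs1 @ u # x # w # vs2) (es1 @ e # f # es2)"
    and "w \<in> inc e \<Longrightarrow> walk_steps inc (vs1 @ u # x # w # vs2) (es1 @ f # e # es2)"
  using steps assms(3-) walk_steps_append_Cons[OF len, of inc u w vs2]
    walk_steps_append_Cons[OF len, of inc u x "w # vs2"] by auto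

lemma card_Diff_eq_1_in_either:
  assumes "card (B - A) = 1" "u \<in> B" "w \<in> B" "u \<noteq> w"
  shows "u \<in> A \<or> w \<in> A"
proof (rule ccontr)
  assume "\<not> ?thesis"
  then have "{u, w} \<subseteq> B - A" using assms(2,3) by auto
  then have "card {u, w} \<le> 1"
    using assms(1) card_mono[of "B - A" "{u, w}"] by (simp add: card_ge_0_finite)
  then show False using assms(4) by simp
qed

lemma card_ge_3_ex_other:
  assumes "card S \<ge> 3"
  shows "\<exists>x\<in>S. x \<noteq> a \<and> x \<noteq> b"
proof (rule ccontr)
  assume "\<not> ?thesis"
  then have "card S \<le> card {a, b}"
    using assms by (intro card_mono) auto
  also have "\<dots> \<le> 2" by (simp add: card_insert_if)
  finally show False using assms by simp
qed

lemma euler_tour_two_edges: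
  assumes "a \<in> inc e \<inter> inc f" "b \<in> inc e \<inter> inc f" "a \<noteq> b" "e \<noteq> f"
    and "inc e \<subseteq> V" "inc f \<subseteq> V"
  shows "euler_tour V {e, f} inc [a, b, a] [e, f]"
  using assms
  unfolding euler_tour_def closed_walk_def strict_trail_def walk_iff_walk_steps by auto

lemma euler_tour_insert_edge:
  assumes tour: "euler_tour V T inc vs es"
    and "f \<in> T" "e \<notin> T" "inc e \<subseteq> V"
    and outside: "card (inc f - inc e) = 1" and common: "card (inc e \<inter> inc f) \<ge> 3"
  shows "\<exists>vs es. euler_tour V (insert e T) inc vs es"
proof -
  from tour have steps: "walk_steps inc vs es" and "set vs \<subseteq> V"
    and "distinct es" "set es = T" "hd vs = last vs"
    unfolding euler_tour_def closed_walk_def strict_trail_def walk_iff_walk_steps by auto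
  obtain vs1 u w vs2 es1 es2 where vs: "vs = vs1 @ u # w # vs2" and es: "es = es1 @ f # es2"
    and len: "length vs1 = length es1"
    using walk_steps_split_at_edge[OF steps] \<open>f \<in> T\<close> \<open>set es = T\<close> by blast
  from steps have "walk_steps inc (vs1 @ u # w # vs2) (es1 @ f # es2)"
    and "u \<noteq> w" "u \<in> inc f" "w \<in> inc f"
    unfolding vs es walk_steps_append_Cons[OF len] by simp_all
  moreover obtain x where x: "x \<in> inc e" "x \<in> inc f" "x \<noteq> u" "x \<noteq> w"
    using card_ge_3_ex_other[OF common] by blast
  moreover have "u \<in> inc e \<or> w \<in> inc e"
    using card_Diff_eq_1_in_either[OF outside] \<open>u \<noteq> w\<close> \<open>u \<in> inc f\<close> \<open>w \<in> inc f\<close> by blast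
  ultimately obtain es' where steps': "walk_steps inc (vs1 @ u # x # w # vs2) es'"
    and "es' \<in> {es1 @ e # f # es2, es1 @ f # e # es2}"
    using walk_steps_detour[OF len] by blast
  then have "set es' = insert e T" "distinct es'" "length es' \<ge> 2"
    using es \<open>set es = T\<close> \<open>distinct es\<close> \<open>e \<notin> T\<close> by auto
  moreover have "set (vs1 @ u # x # w # vs2) \<subseteq> V"
    using \<open>set vs \<subseteq> V\<close> \<open>inc e \<subseteq> V\<close> x vs by auto
  moreover have "hd (vs1 @ u # x # w # vs2) = last (vs1 @ u # x # w # vs2)"
    using \<open>hd vs = last vs\<close> vs by (simp add: hd_append split: if_splits)
  ultimately have "euler_tour V (insert e T) inc (vs1 @ u # x # w # vs2) es'"
    using steps' unfolding euler_tour_def closed_walk_def strict_trail_def walk_iff_walk_steps by blast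
  then show ?thesis by blast
qed

lemma rtrancl_crossing_arc:
  assumes "(x, r) \<in> A\<^sup>*" "r \<in> T" "x \<notin> T"
  obtains p q where "(p, q) \<in> A" "p \<notin> T" "q \<in> T"
proof -
  from assms have "\<exists>p q. (p, q) \<in> A \<and> p \<notin> T \<and> q \<in> T"
    by (induction rule: rtrancl_induct) auto
  then show thesis using that by blast
qed

lemma euler_tour_extend_along_arcs:
  assumes "hypergraph V E inc" "A \<subseteq> D3_arcs E inc" "\<forall>x\<in>E. (x, r) \<in> A\<^sup>*"
    and "T \<subseteq> E" "r \<in> T" "euler_tour V T inc vs es"
  shows "eulerian V E inc"
  using assms(4-)
proof (induction "card (E - T)" arbitrary: T vs es rule: less_induct)
  case less
  have "finite E" using assms(1) unfolding hypergraph_def by simp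
  show ?case
  proof (cases "T = E")
    case True
    then show ?thesis using less.prems unfolding eulerian_def by blast
  next
    case False
    then obtain y where "y \<in> E" "y \<notin> T" using less.prems(1) by blast
    then have "(y, r) \<in> A\<^sup>*" using assms(3) by blast
    then obtain p q where pq: "(p, q) \<in> A" "p \<notin> T" "q \<in> T"
      using less.prems(2) \<open>y \<notin> T\<close> by (rule rtrancl_crossing_arc)
    then have "p \<in> E" "card (inc q - inc p) = 1" "card (inc p \<inter> inc q) \<ge> 3"
      using assms(2) unfolding D3_arcs_def by auto
    moreover have "inc p \<subseteq> V" using assms(1) \<open>p \<in> E\<close> unfolding hypergraph_def by simp
    ultimately obtain vs' es' where "euler_tour V (insert p T) inc vs' es'"
      using euler_tour_insert_edge[OF less.prems(3) pq(3,2)] by blast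
    moreover have "card (E - insert p T) < card (E - T)"
      using \<open>finite E\<close> \<open>p \<in> E\<close> \<open>p \<notin> T\<close> by (intro psubset_card_mono) auto
    ultimately show ?thesis
      using less.hyps less.prems \<open>p \<in> E\<close> by blast
  qed
qed

theorem corollary2p10:
  fixes V :: "'v set" and E :: "'e set" and inc :: "'e \<Rightarrow> 'v set"
  assumes "hypergraph V E inc"
    and "has_nontrivial_spanning_arborescence E (D3_arcs E inc)"
  shows "eulerian V E inc"
proof -
  obtain A r where "card E \<ge> 2" and arcs: "A \<subseteq> D3_arcs E inc" and "arborescence E A r"
    using assms(2) unfolding has_nontrivial_spanning_arborescence_def by blast
  then have "r \<in> E" and reach: "\<forall>x\<in>E. (x, r) \<in> A\<^sup>*"
    unfolding arborescence_def by simp_all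
  have "E \<noteq> {r}" using \<open>card E \<ge> 2\<close> by auto
  then obtain x where "x \<in> E" "x \<noteq> r" using \<open>r \<in> E\<close> by blast
  then have "(x, r) \<in> A\<^sup>*" "r \<in> {r}" "x \<notin> {r}" using reach by auto
  then obtain u q where "(u, q) \<in> A" "u \<notin> {r}" "q \<in> {r}"
    by (rule rtrancl_crossing_arc)
  then have "u \<noteq> r" "u \<in> E" and common: "card (inc u \<inter> inc r) \<ge> 3"
    using arcs unfolding D3_arcs_def by auto
  obtain a where "a \<in> inc u \<inter> inc r" using card_ge_3_ex_other[OF common] by blast
  moreover obtain b where "b \<in> inc u \<inter> inc r" "b \<noteq> a"
    using card_ge_3_ex_other[OF common, of a a] by blast
  moreover have "inc u \<subseteq> V" "inc r \<subseteq> V"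
    using assms(1) \<open>u \<in> E\<close> \<open>r \<in> E\<close> unfolding hypergraph_def by auto
  ultimately have "euler_tour V {u, r} inc [a, b, a] [u, r]"
    using \<open>u \<noteq> r\<close> by (intro euler_tour_two_edges) auto
  moreover have "{u, r} \<subseteq> E" using \<open>u \<in> E\<close> \<open>r \<in> E\<close> by simp
  ultimately show ?thesis
    using euler_tour_extend_along_arcs[OF assms(1) arcs reach] by blast
qed

end
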